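(* Let $n\ge1$ and $y>1$, and define $\alpha$ by $2\alpha=2\pi-\sigma_n(y)$. Then $0<\alpha<\pi$ and $U_n(2\alpha)=1/y$.
   Context: $\mathbb{T}=[0,2\pi)$ with endpoints identified, with Lebesgue measure $\mathrm{mes}$. $\mathcal{F}_n$ is the set of real trigonometric polynomials of order at most $n$. $\mu(f)=\mathrm{mes}\{t\in\mathbb{T}:|f(t)|\ge1\}$; $\mathcal{F}_n(y)=\{y\cos nt+f_{n-1}:f_{n-1}\in\mathcal{F}_{n-1}\}$; $\sigma_n(y)=\inf\{\mu(f):f\in\mathcal{F}_n(y)\}$. For compact $Q\subset\mathbb{T}$, $U_n(Q)=\inf\{\max_{t\in Q}|\cos nt-f_{n-1}(t)|:f_{n-1}\in\mathcal{F}_{n-1}\}$ and $U_n(2\alpha)=\inf\{U_n(Q):Q\text{ compact},\mathrm{mes}(Q)=2\alpha\}$. *)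

theory Defs
  imports "HOL-Analysis.Analysis"
begin

definition torus :: "real set" where
  "torus = {0..<2*pi}"

definition mes :: "real set \<Rightarrow> real" where
  "mes A = measure lebesgue A"

definition trig_polys :: "nat \<Rightarrow> (real \<Rightarrow> real) set" where
  "trig_polys n = {f. \<exists>a b :: nat \<Rightarrow> real.
      f = (\<lambda>t. a 0 + (\<Sum>k\<in>{1..n}. a k * cos (real k * t) + b k * sin (real k * t)))}"

definition mu :: "(real \<Rightarrow> real) \<Rightarrow> real" where
  "mu f = mes {t \<in> torus. \<bar>f t\<bar> \<ge> 1}"

definition trig_polys_lead :: "nat \<Rightarrow> real \<Rightarrow> (real \<Rightarrow> real) set" where
  "trig_polys_lead n y = {(\<lambda>t. y * cos (real n * t) + g t) | g. g \<in> trig_polys (n - 1)}"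

definition sigma_n :: "nat \<Rightarrow> real \<Rightarrow> real" where
  "sigma_n n y = Inf (mu ` trig_polys_lead n y)"

text \<open>A compact subset of the circle is represented by a compact subset of [0,2pi]
  (its lift); all functions involved are 2pi-periodic and the endpoints have measure zero.\<close>
definition U_set :: "nat \<Rightarrow> real set \<Rightarrow> real" where
  "U_set n Q = Inf ((\<lambda>g. Sup ((\<lambda>t. \<bar>cos (real n * t) - g t\<bar>) ` Q)) ` trig_polys (n - 1))"

definition U_meas :: "nat \<Rightarrow> real \<Rightarrow> real" where
  "U_meas n m = Inf (U_set n ` {Q. compact Q \<and> Q \<subseteq> {0..2*pi} \<and> mes Q = m})"

end

theory Submission
  imports Defs "HOL-Computational_Algebra.Polynomial"
begin

(* A nonzero trigonometric polynomial has finitely many zeros on a period (it is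
   z^(-N) times an algebraic polynomial in z = e^(it)), hence its small sublevel sets
   have small measure; by compactness this gives a Remez-type bound: the coefficients
   of p are bounded as soon as {|p| \<le> 1} has measure at least \<delta>.  Consequently a
   minimising sequence for \<sigma>_n(y) has a convergent subsequence whose limit f is
   extremal: mes {|f| \<ge> 1 + \<eta>} \<le> \<sigma>_n(y) for every \<eta> > 0.  An alternating-sum
   identity at the points j\<pi>/n shows that every f \<in> F_n(y) reaches |f| \<ge> |y|.

   From these facts: \<sigma>_n(y) < 2\<pi> (test y cos nt), \<sigma>_n(y) > 0 (the extremal f
   exceeds 1 + \<eta> on an open set), U_n(Q) \<ge> 1/y for every compact Q of measure
   2\<pi> - \<sigma>_n(y) (otherwise a rescaled polynomial beats \<sigma>_n(y) by a level band of
   positive measure), and U_n(Q) \<le> (1 + \<eta>)/y for a compact part Q of the sublevel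
   set {|f| \<le> 1 + \<eta>} of exactly that measure. *)

definition trig_poly :: "nat \<Rightarrow> (nat \<Rightarrow> real) \<Rightarrow> (nat \<Rightarrow> real) \<Rightarrow> real \<Rightarrow> real" where
  "trig_poly N a b t = a 0 + (\<Sum>k\<in>{1..N}. a k * cos (real k * t) + b k * sin (real k * t))"

definition coeff_dist ::
    "nat \<Rightarrow> (nat \<Rightarrow> real) \<Rightarrow> (nat \<Rightarrow> real) \<Rightarrow> (nat \<Rightarrow> real) \<Rightarrow> (nat \<Rightarrow> real) \<Rightarrow> real" where
  "coeff_dist N a b a' b' = \<bar>a 0 - a' 0\<bar> + (\<Sum>k\<in>{1..N}. \<bar>a k - a' k\<bar> + \<bar>b k - b' k\<bar>)"

definition coeff_norm :: "nat \<Rightarrow> (nat \<Rightarrow> real) \<Rightarrow> (nat \<Rightarrow> real) \<Rightarrow> real" where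
  "coeff_norm N a b = coeff_dist N a b (\<lambda>_. 0) (\<lambda>_. 0)"

lemma trig_polys_iff: "f \<in> trig_polys N \<longleftrightarrow> (\<exists>a b. f = trig_poly N a b)"
  unfolding trig_polys_def trig_poly_def[abs_def] by auto

lemma trig_poly_continuous: "continuous_on S (trig_poly N a b)"
  unfolding trig_poly_def[abs_def] by (intro continuous_intros)

lemma trig_polys_continuous: "g \<in> trig_polys N \<Longrightarrow> continuous_on UNIV g"
  unfolding trig_polys_iff using trig_poly_continuous by blast

lemma trig_poly_zero: "trig_poly N (\<lambda>_. 0) (\<lambda>_. 0) t = 0"
  unfolding trig_poly_def by simp

lemma trig_poly_scale: "trig_poly N (\<lambda>k. c * a k) (\<lambda>k. c * b k) t = c * trig_poly N a b t"
  unfolding trig_poly_def by (simp add: algebra_simps sum_distrib_left)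

lemma coeff_norm_scale: "coeff_norm N (\<lambda>k. c * a k) (\<lambda>k. c * b k) = \<bar>c\<bar> * coeff_norm N a b"
  unfolding coeff_norm_def coeff_dist_def
  by (simp add: abs_mult sum_distrib_left distrib_left)

lemma trig_poly_dist_le: "\<bar>trig_poly N a b t - trig_poly N a' b' t\<bar> \<le> coeff_dist N a b a' b'"
proof -
  have term_le: "\<bar>(a k - a' k) * cos (real k * t) + (b k - b' k) * sin (real k * t)\<bar>
      \<le> \<bar>a k - a' k\<bar> + \<bar>b k - b' k\<bar>" for k
  proof -
    have "\<bar>(a k - a' k) * cos (real k * t)\<bar> \<le> \<bar>a k - a' k\<bar>"
      by (simp add: abs_mult mult_left_le)
    moreover have "\<bar>(b k - b' k) * sin (real k * t)\<bar> \<le> \<bar>b k - b' k\<bar>"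
      by (simp add: abs_mult mult_left_le)
    ultimately show ?thesis by linarith
  qed
  have "trig_poly N a b t - trig_poly N a' b' t = (a 0 - a' 0) +
     (\<Sum>k\<in>{1..N}. (a k - a' k) * cos (real k * t) + (b k - b' k) * sin (real k * t))"
    unfolding trig_poly_def by (simp add: algebra_simps sum_subtractf[symmetric])
  also have "\<bar>\<dots>\<bar> \<le> \<bar>a 0 - a' 0\<bar>
      + (\<Sum>k\<in>{1..N}. \<bar>(a k - a' k) * cos (real k * t) + (b k - b' k) * sin (real k * t)\<bar>)"
    by (rule order_trans[OF abs_triangle_ineq add_left_mono[OF sum_abs]])
  also have "\<dots> \<le> coeff_dist N a b a' b'"
    unfolding coeff_dist_def by (intro add_left_mono sum_mono term_le)
  finally show ?thesis .
qed

lemma coeff_norm_dist_le: "\<bar>coeff_norm N a b - coeff_norm N a' b'\<bar> \<le> coeff_dist N a b a' b'"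
proof -
  have "coeff_norm N a b - coeff_norm N a' b' = (\<bar>a 0\<bar> - \<bar>a' 0\<bar>)
      + (\<Sum>k\<in>{1..N}. (\<bar>a k\<bar> + \<bar>b k\<bar>) - (\<bar>a' k\<bar> + \<bar>b' k\<bar>))"
    unfolding coeff_norm_def coeff_dist_def sum_subtractf by simp
  also have "\<bar>\<dots>\<bar> \<le> \<bar>\<bar>a 0\<bar> - \<bar>a' 0\<bar>\<bar> + (\<Sum>k\<in>{1..N}. \<bar>(\<bar>a k\<bar> + \<bar>b k\<bar>) - (\<bar>a' k\<bar> + \<bar>b' k\<bar>)\<bar>)"
    by (rule order_trans[OF abs_triangle_ineq add_left_mono[OF sum_abs]])
  also have "\<dots> \<le> coeff_dist N a b a' b'"
    unfolding coeff_dist_def by (intro add_mono sum_mono) linarith+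
  finally show ?thesis .
qed

lemma coeff_norm_bounds_coeffs:
  shows "k \<le> N \<Longrightarrow> \<bar>a k\<bar> \<le> coeff_norm N a b" and "k \<in> {1..N} \<Longrightarrow> \<bar>b k\<bar> \<le> coeff_norm N a b"
proof -
  have single: "\<bar>a k\<bar> + \<bar>b k\<bar> \<le> (\<Sum>k\<in>{1..N}. \<bar>a k\<bar> + \<bar>b k\<bar>)" if "k \<in> {1..N}" for k
    using that by (intro member_le_sum) auto
  show "\<bar>a k\<bar> \<le> coeff_norm N a b" if "k \<le> N"
  proof (cases "k = 0")
    case True
    then show ?thesis unfolding coeff_norm_def coeff_dist_def by (simp add: sum_nonneg)
  next
    case False
    then show ?thesis using single[of k] that unfolding coeff_norm_def coeff_dist_def by simp
  qed
  show "\<bar>b k\<bar> \<le> coeff_norm N a b" if "k \<in> {1..N}"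
    using single[OF that] unfolding coeff_norm_def coeff_dist_def by simp
qed

definition lead_poly :: "nat \<Rightarrow> real \<Rightarrow> (nat \<Rightarrow> real) \<Rightarrow> (nat \<Rightarrow> real) \<Rightarrow> real \<Rightarrow> real" where
  "lead_poly n y a b t = y * cos (real n * t) + trig_poly (n - 1) a b t"

lemma trig_polys_lead_iff: "f \<in> trig_polys_lead n y \<longleftrightarrow> (\<exists>a b. f = lead_poly n y a b)"
  unfolding trig_polys_lead_def trig_polys_iff lead_poly_def[abs_def] by auto

lemma lead_poly_continuous: "continuous_on S (lead_poly n y a b)"
  unfolding lead_poly_def[abs_def] by (intro continuous_intros trig_poly_continuous)

lemma lead_poly_dist_le: "\<bar>lead_poly n y a b t - lead_poly n y a' b' t\<bar> \<le> coeff_dist (n - 1) a b a' b'"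
  unfolding lead_poly_def using trig_poly_dist_le[of "n - 1" a b t a' b'] by simp

lemma lead_poly_as_trig_poly:
  assumes "n \<ge> 1"
  shows "lead_poly n y a b t = trig_poly n (a(n := y)) (b(n := 0)) t"
proof -
  have split: "{1..n} = insert n {1..n - 1}" using assms by auto
  have "(\<Sum>k\<in>{1..n - 1}. (a(n := y)) k * cos (real k * t) + (b(n := 0)) k * sin (real k * t))
      = (\<Sum>k\<in>{1..n - 1}. a k * cos (real k * t) + b k * sin (real k * t))"
    by (intro sum.cong) auto
  then show ?thesis unfolding lead_poly_def trig_poly_def split using assms by simp
qed

lemma lead_poly_scaled:
  "lead_poly n z (\<lambda>i. - z * a i) (\<lambda>i. - z * b i) t = z * (cos (real n * t) - trig_poly (n - 1) a b t)"
  unfolding lead_poly_def using trig_poly_scale[of "n - 1" "- z" a b t] by (simp add: algebra_simps)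

lemma sublevel_lmeasurable:
  assumes "continuous_on UNIV h" "A \<in> sets lebesgue" "bounded A" "{x. P x} \<in> sets borel"
  shows "{t\<in>A. P (h t)} \<in> lmeasurable"
proof -
  have "h \<in> borel_measurable borel"
    using assms(1) by (rule borel_measurable_continuous_onI)
  from measurable_sets[OF this assms(4)] have "h -` {x. P x} \<in> sets lebesgue"
    by (simp add: sets_lborel)
  then have "A \<inter> h -` {x. P x} \<in> sets lebesgue" using assms(2) by auto
  moreover have "{t\<in>A. P (h t)} = A \<inter> h -` {x. P x}" by auto
  ultimately show ?thesis
    using assms(3) bounded_set_imp_lmeasurable bounded_subset by (metis Int_lower1)
qed

lemma torus_sublevel_lmeasurable:
  assumes "continuous_on UNIV h" "{x. P x} \<in> sets borel"
  shows "{t\<in>torus. P (h t)} \<in> lmeasurable"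
  unfolding torus_def by (rule sublevel_lmeasurable[OF assms(1) _ _ assms(2)]) auto

lemma mes_Un_disjoint:
  "A \<in> lmeasurable \<Longrightarrow> B \<in> lmeasurable \<Longrightarrow> A \<inter> B = {} \<Longrightarrow> mes (A \<union> B) = mes A + mes B"
  unfolding mes_def by (metis measure_Union fmeasurableD fmeasurableD2 infinity_ennreal_def)

lemma mes_mono: "A \<subseteq> B \<Longrightarrow> A \<in> sets lebesgue \<Longrightarrow> B \<in> lmeasurable \<Longrightarrow> mes A \<le> mes B"
  unfolding mes_def by (rule measure_mono_fmeasurable)

lemma torus_measure_split:
  fixes h :: "real \<Rightarrow> real"
  assumes "continuous_on UNIV h"
  shows "mes {t\<in>torus. c \<le> h t} + mes {t\<in>torus. h t < c} = 2*pi"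
proof -
  have "mes ({t\<in>torus. c \<le> h t} \<union> {t\<in>torus. h t < c})
      = mes {t\<in>torus. c \<le> h t} + mes {t\<in>torus. h t < c}"
    by (intro mes_Un_disjoint torus_sublevel_lmeasurable[OF assms]) (auto, measurable)
  moreover have "{t\<in>torus. c \<le> h t} \<union> {t\<in>torus. h t < c} = {0..<2*pi}"
    unfolding torus_def by auto
  ultimately show ?thesis unfolding mes_def by simp
qed

lemma closed_sublevel_measure_ge:
  fixes h :: "real \<Rightarrow> real"
  assumes h: "continuous_on UNIV h"
  shows "2*pi - mes {t\<in>torus. c \<le> h t} \<le> mes ({t. h t \<le> c} \<inter> {0..2*pi})"
proof -
  have "mes {t\<in>torus. h t < c} \<le> mes ({t. h t \<le> c} \<inter> {0..2*pi})"
  proof (rule mes_mono[OF _ fmeasurableD])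
    show "{t\<in>torus. h t < c} \<in> lmeasurable"
      by (rule torus_sublevel_lmeasurable[where P="\<lambda>x. x < c", OF h]) measurable
    show "{t. h t \<le> c} \<inter> {0..2*pi} \<in> lmeasurable"
      by (intro lmeasurable_compact closed_Int_compact closed_Collect_le continuous_intros h) auto
  qed (auto simp: torus_def)
  then show ?thesis using torus_measure_split[OF h, of c] by linarith
qed

lemma disjoint_levels_measure_bound:
  fixes h :: "real \<Rightarrow> real"
  assumes h: "continuous_on UNIV h" and Q: "compact Q" "Q \<subseteq> {0..2*pi}"
    and below: "\<And>t. t \<in> Q \<Longrightarrow> h t < c" and "c < d"
  shows "mes {t\<in>torus. d \<le> h t} + mes {t\<in>torus. c < h t \<and> h t < d} + mes Q \<le> 2*pi"
proof -
  define A where "A = {t\<in>torus. d \<le> h t}"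
  define B where "B = {t\<in>torus. c \<le> h t}"
  define D where "D = {t\<in>torus. c < h t \<and> h t < d}"
  have A_meas: "A \<in> lmeasurable" unfolding A_def
    by (rule torus_sublevel_lmeasurable[where P="\<lambda>x. d \<le> x", OF h]) measurable
  have B_meas: "B \<in> lmeasurable" unfolding B_def
    by (rule torus_sublevel_lmeasurable[where P="\<lambda>x. c \<le> x", OF h]) measurable
  have D_meas: "D \<in> lmeasurable" unfolding D_def
    by (rule torus_sublevel_lmeasurable[where P="\<lambda>x. c < x \<and> x < d", OF h]) measurable
  have Q_meas: "Q \<in> lmeasurable" using Q(1) by (rule lmeasurable_compact)
  have "mes A + mes D = mes (A \<union> D)"
    by (rule mes_Un_disjoint[OF A_meas D_meas, symmetric]) (auto simp: A_def D_def)
  also have "\<dots> \<le> mes B"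
    using \<open>c < d\<close> by (intro mes_mono fmeasurableD B_meas sets.Un A_meas D_meas)
                      (auto simp: A_def B_def D_def)
  finally have "mes A + mes D \<le> mes B" .
  moreover have "B \<inter> Q = {}" using below unfolding B_def by force
  then have "mes B + mes Q = mes (B \<union> Q)"
    by (rule mes_Un_disjoint[OF B_meas Q_meas, symmetric])
  moreover have "mes (B \<union> Q) \<le> mes {0..2*pi}"
    using Q(2) by (intro mes_mono fmeasurableD sets.Un B_meas Q_meas) (auto simp: B_def torus_def)
  moreover have "mes {0..2*pi} = 2*pi" unfolding mes_def by simp
  ultimately show ?thesis unfolding A_def D_def by linarith
qed

lemma open_trace_measure_pos:
  assumes "t0 \<in> {0..2*pi}" "open U" "t0 \<in> U" "S \<in> lmeasurable" "U \<inter> {0..<2*pi} \<subseteq> S"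
  shows "0 < mes S"
proof -
  obtain e where e: "e > 0" "ball t0 e \<subseteq> U" using assms(2,3) open_contains_ball by blast
  define d where "d = min (e/2) (pi/2)"
  have d: "d > 0" "d < e" "d \<le> pi/2" unfolding d_def using e pi_gt_zero by auto
  obtain u v where uv: "u < v" "{u..v} \<subseteq> ball t0 e \<inter> {0..<2*pi}"
  proof (cases "t0 \<le> pi")
    case True
    show ?thesis
      by (rule that[of t0 "t0 + d"]) (use True d assms(1) in \<open>auto simp: dist_real_def\<close>)
  next
    case False
    show ?thesis
      by (rule that[of "t0 - d" "t0 - d/2"]) (use False d assms(1) in \<open>auto simp: dist_real_def\<close>)
  qed
  then have "{u..v} \<subseteq> S" using e(2) assms(5) by blast
  then have "mes {u..v} \<le> mes S" by (intro mes_mono) (auto simp: assms(4))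
  moreover have "mes {u..v} = v - u" unfolding mes_def using uv by simp
  ultimately show ?thesis using uv by simp
qed

lemma level_band_measure_pos:
  fixes h :: "real \<Rightarrow> real"
  assumes h: "continuous_on UNIV h" and q: "q \<in> {0..2*pi}" and t1: "t1 \<in> {0..2*pi}"
    and below: "h q < lo" and "lo < hi" and above: "hi \<le> h t1"
  shows "0 < mes {t\<in>torus. lo < h t \<and> h t < hi}"
proof -
  define w where "w = (lo + hi) / 2"
  have w: "lo < w" "w < hi" unfolding w_def using \<open>lo < hi\<close> by auto
  have hc: "continuous_on S h" for S using h by (rule continuous_on_subset) simp
  obtain ts where ts: "ts \<in> {0..2*pi}" "h ts = w"
  proof (cases "q \<le> t1")
    case True
    then obtain x where "q \<le> x" "x \<le> t1" "h x = w"
      using IVT'[of h q w t1, OF _ _ True hc] below above w by auto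
    then show ?thesis using that[of x] q t1 by auto
  next
    case False
    then obtain x where "t1 \<le> x" "x \<le> q" "h x = w"
      using IVT2'[of h q w t1, OF _ _ _ hc] below above w by auto
    then show ?thesis using that[of x] q t1 by auto
  qed
  show ?thesis
  proof (rule open_trace_measure_pos[OF ts(1)])
    show "open {t. lo < h t \<and> h t < hi}"
      by (intro open_Collect_conj open_Collect_less continuous_intros h)
    show "ts \<in> {t. lo < h t \<and> h t < hi}" using ts w by simp
    show "{t\<in>torus. lo < h t \<and> h t < hi} \<in> lmeasurable"
      by (rule torus_sublevel_lmeasurable[where P="\<lambda>x. lo < x \<and> x < hi", OF h]) measurable
    show "{t. lo < h t \<and> h t < hi} \<inter> {0..<2*pi} \<subseteq> {t\<in>torus. lo < h t \<and> h t < hi}"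
      unfolding torus_def by auto
  qed
qed

text \<open>A closed set whose part in [0, 2\<pi>] has measure at least m contains a compact subset of
  measure exactly m: the measure of its part in [0, x] is 1-Lipschitz in x.\<close>
lemma compact_subset_with_measure:
  assumes "closed F" and "0 \<le> m" and "m \<le> mes (F \<inter> {0..2*pi})"
  obtains Q where "compact Q" "Q \<subseteq> F \<inter> {0..2*pi}" "mes Q = m"
proof -
  define \<phi> where "\<phi> x = mes (F \<inter> {0..x})" for x
  have compact_part: "compact (F \<inter> {0..x})" for x
    using assms(1) by (rule closed_Int_compact) simp
  have part_meas: "F \<inter> {0..x} \<in> lmeasurable" for x
    using compact_part by (rule lmeasurable_compact)
  have increment: "\<phi> x \<le> \<phi> x' \<and> \<phi> x' \<le> \<phi> x + (x' - x)" if "x \<le> x'" for x x'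
  proof
    show "\<phi> x \<le> \<phi> x'" unfolding \<phi>_def
      by (rule mes_mono[OF _ fmeasurableD[OF part_meas] part_meas]) (use that in auto)
    have "\<phi> x' \<le> mes ((F \<inter> {0..x}) \<union> {x..x'})" unfolding \<phi>_def
      by (rule mes_mono[OF _ fmeasurableD[OF part_meas]]) (use part_meas in auto)
    also have "\<dots> \<le> mes (F \<inter> {0..x}) + mes {x..x'}" unfolding mes_def
      by (rule measure_Un_le) (use part_meas in auto)
    also have "mes {x..x'} = x' - x" unfolding mes_def using that by simp
    finally show "\<phi> x' \<le> \<phi> x + (x' - x)" unfolding \<phi>_def .
  qed
  have "dist (\<phi> x) (\<phi> x') \<le> 1 * dist x x'" for x x'
    using increment[of x x'] increment[of x' x] by (cases "x \<le> x'") (auto simp: dist_real_def)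
  then have cont: "continuous_on {0..2*pi} \<phi>"
    by (intro lipschitz_on_continuous_on[of 1] lipschitz_onI) auto
  have "\<phi> 0 \<le> mes {0::real}" unfolding \<phi>_def
    by (rule mes_mono[OF _ fmeasurableD[OF part_meas]]) (auto intro: lmeasurable_compact)
  then have "\<phi> 0 \<le> m" using assms(2) unfolding mes_def by simp
  moreover have "m \<le> \<phi> (2*pi)" using assms(3) unfolding \<phi>_def .
  ultimately obtain x where x: "0 \<le> x" "x \<le> 2*pi" "\<phi> x = m"
    using IVT'[of \<phi> 0 m "2*pi", OF _ _ _ cont] by auto
  show ?thesis
    by (rule that[of "F \<inter> {0..x}"]) (use compact_part x in \<open>auto simp: \<phi>_def\<close>)
qed

lemma unit_square_identity:
  assumes "S^2 + C^2 = 1"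
  shows "(complex_of_real x - \<i> * complex_of_real y) / 2 * (Complex C S * Complex C S)
       + (complex_of_real x + \<i> * complex_of_real y) / 2
       = Complex C S * complex_of_real (x * C + y * S)"
proof (rule complex_eqI)
  show "Re ((complex_of_real x - \<i> * complex_of_real y) / 2 * (Complex C S * Complex C S)
      + (complex_of_real x + \<i> * complex_of_real y) / 2) = Re (Complex C S * complex_of_real (x * C + y * S))"
    using assms by simp algebra
  show "Im ((complex_of_real x - \<i> * complex_of_real y) / 2 * (Complex C S * Complex C S)
      + (complex_of_real x + \<i> * complex_of_real y) / 2) = Im (Complex C S * complex_of_real (x * C + y * S))"
    using assms by simp algebra
qed

lemma cis_term_identity:
  fixes x y t :: real
  assumes "k \<le> N"
  shows "(complex_of_real x - \<i> * complex_of_real y) / 2 * cis t ^ (N + k)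
       + (complex_of_real x + \<i> * complex_of_real y) / 2 * cis t ^ (N - k)
       = cis t ^ N * complex_of_real (x * cos (real k * t) + y * sin (real k * t))"
proof -
  define w where "w = cis t ^ (N - k)"
  define c where "c = cis t ^ k"
  have high: "cis t ^ (N + k) = w * c * c" unfolding w_def c_def using assms
    by (metis add.commute le_add_diff_inverse power_add mult.assoc)
  have mid: "cis t ^ N = w * c" unfolding w_def c_def using assms
    by (metis le_add_diff_inverse2 power_add)
  have c: "c = cis (real k * t)"
    unfolding c_def by (rule Complex.DeMoivre)
  have key: "(complex_of_real x - \<i> * complex_of_real y) / 2 * (c * c)
      + (complex_of_real x + \<i> * complex_of_real y) / 2
      = c * complex_of_real (x * cos (real k * t) + y * sin (real k * t))"
    unfolding c cis.code by (rule unit_square_identity) simp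
  show ?thesis unfolding high mid w_def[symmetric]
    using arg_cong[OF key, of "\<lambda>z. w * z"] by (simp add: algebra_simps)
qed

text \<open>The algebraic polynomial P with P(e^(it)) = e^(iNt) p(t) for p = trig_poly N a b.\<close>
definition assoc_poly :: "nat \<Rightarrow> (nat \<Rightarrow> real) \<Rightarrow> (nat \<Rightarrow> real) \<Rightarrow> complex poly" where
  "assoc_poly N a b = monom (complex_of_real (a 0)) N + (\<Sum>k\<in>{1..N}.
     monom ((complex_of_real (a k) - \<i> * complex_of_real (b k)) / 2) (N + k)
   + monom ((complex_of_real (a k) + \<i> * complex_of_real (b k)) / 2) (N - k))"

lemma assoc_poly_cis: "poly (assoc_poly N a b) (cis t) = cis t ^ N * complex_of_real (trig_poly N a b t)"
proof -
  have "poly (assoc_poly N a b) (cis t) = complex_of_real (a 0) * cis t ^ N + (\<Sum>k\<in>{1..N}.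
     (complex_of_real (a k) - \<i> * complex_of_real (b k)) / 2 * cis t ^ (N + k)
   + (complex_of_real (a k) + \<i> * complex_of_real (b k)) / 2 * cis t ^ (N - k))"
    unfolding assoc_poly_def by (simp add: poly_sum poly_monom)
  also have "\<dots> = complex_of_real (a 0) * cis t ^ N + (\<Sum>k\<in>{1..N}.
     cis t ^ N * complex_of_real (a k * cos (real k * t) + b k * sin (real k * t)))"
    by (intro arg_cong2[where f="(+)"] refl sum.cong cis_term_identity) auto
  also have "\<dots> = cis t ^ N * complex_of_real (trig_poly N a b t)"
    by (simp add: trig_poly_def sum_distrib_left distrib_left mult.commute)
  finally show ?thesis .
qed

text \<open>The coefficients of the associated polynomial recover a 0 and a j - i b j, so it vanishes only
  for the zero trigonometric polynomial.\<close>
lemma assoc_poly_coeff_middle: "coeff (assoc_poly N a b) N = complex_of_real (a 0)"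
proof -
  have "\<forall>k\<in>{1..N}. coeff (monom ((complex_of_real (a k) - \<i> * complex_of_real (b k)) / 2) (N + k)
     + monom ((complex_of_real (a k) + \<i> * complex_of_real (b k)) / 2) (N - k)) N = 0"
    by (auto simp: coeff_monom)
  then show ?thesis unfolding assoc_poly_def coeff_add coeff_sum by simp
qed

lemma assoc_poly_coeff_upper:
  assumes "j \<in> {1..N}"
  shows "coeff (assoc_poly N a b) (N + j) = (complex_of_real (a j) - \<i> * complex_of_real (b j)) / 2"
proof -
  have "(\<Sum>k\<in>{1..N}. coeff (monom ((complex_of_real (a k) - \<i> * complex_of_real (b k)) / 2) (N + k)
     + monom ((complex_of_real (a k) + \<i> * complex_of_real (b k)) / 2) (N - k)) (N + j))
     = (\<Sum>k\<in>{1..N}. if k = j then (complex_of_real (a k) - \<i> * complex_of_real (b k)) / 2 else 0)"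
    using assms by (intro sum.cong refl) (auto simp: coeff_monom)
  also have "\<dots> = (complex_of_real (a j) - \<i> * complex_of_real (b j)) / 2"
    using assms by (simp add: sum.delta)
  finally show ?thesis
    using assms unfolding assoc_poly_def coeff_add coeff_sum by (simp add: coeff_monom)
qed

lemma cis_inj_on_period: "inj_on cis {0..<2*pi}"
proof (rule inj_onI)
  fix s t assume s: "s \<in> {0..<2*pi}" and t: "t \<in> {0..<2*pi}" and e: "cis s = cis t"
  have "sin s = sin t \<and> cos s = cos t"
    using arg_cong[OF e, of Re] arg_cong[OF e, of Im] by simp
  then obtain m :: int where m: "s = t + 2 * pi * m" using sin_cos_eq_iff by blast
  have "0 \<le> t" "t < 2*pi" "0 \<le> s" "s < 2*pi" using s t by auto
  then have "2 * pi * m < 2 * pi * 1" and "2 * pi * (-1) < 2 * pi * m" using m by linarith+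
  then have "real_of_int m < 1" and "-1 < real_of_int m"
    using mult_less_cancel_left_pos[of "2*pi"] pi_gt_zero by (metis zero_less_mult_iff zero_less_numeral)+
  then have "m = 0" by linarith
  then show "s = t" using m by simp
qed

lemma trig_poly_zeros_finite:
  assumes "coeff_norm N a b \<noteq> 0"
  shows "finite {t\<in>{0..<2*pi}. trig_poly N a b t = 0}"
proof -
  have "assoc_poly N a b \<noteq> 0"
  proof
    assume P: "assoc_poly N a b = 0"
    have "a 0 = 0" using assoc_poly_coeff_middle[of N a b] P by simp
    moreover have "a k = 0 \<and> b k = 0" if "k \<in> {1..N}" for k
      using assoc_poly_coeff_upper[OF that, of a b] P by (simp add: complex_eq_iff)
    ultimately have "coeff_norm N a b = 0" unfolding coeff_norm_def coeff_dist_def by simp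
    then show False using assms by simp
  qed
  then have "finite {z. poly (assoc_poly N a b) z = 0}" by (rule poly_roots_finite)
  moreover have "cis ` {t\<in>{0..<2*pi}. trig_poly N a b t = 0} \<subseteq> {z. poly (assoc_poly N a b) z = 0}"
    by (auto simp: assoc_poly_cis)
  ultimately have "finite (cis ` {t\<in>{0..<2*pi}. trig_poly N a b t = 0})"
    using finite_subset by blast
  moreover have "inj_on cis {t\<in>{0..<2*pi}. trig_poly N a b t = 0}"
    using cis_inj_on_period by (rule inj_on_subset) auto
  ultimately show ?thesis using finite_imageD by blast
qed

lemma bounded_coords_convergent_subseq:
  fixes X :: "nat \<Rightarrow> nat \<Rightarrow> real"
  assumes "finite I" and "\<And>k i. i \<in> I \<Longrightarrow> \<bar>X k i\<bar> \<le> C"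
  shows "\<exists>r. strict_mono r \<and> (\<forall>i\<in>I. convergent (\<lambda>k. X (r k) i))"
  using assms
proof (induction I rule: finite_induct)
  case empty
  show ?case using strict_mono_id by blast
next
  case (insert i0 I)
  then obtain r where r: "strict_mono r" "\<forall>i\<in>I. convergent (\<lambda>k. X (r k) i)" by auto
  obtain r2 where r2: "strict_mono r2" "monoseq (\<lambda>k. X (r (r2 k)) i0)"
    using seq_monosub[of "\<lambda>k. X (r k) i0"] by blast
  have "Bseq (\<lambda>k. X (r (r2 k)) i0)"
    by (intro BseqI'[of _ C]) (use insert.prems in auto)
  then have new: "convergent (\<lambda>k. X (r (r2 k)) i0)"
    using r2(2) Bseq_monoseq_convergent by blast
  have old: "convergent (\<lambda>k. X (r (r2 k)) i)" if "i \<in> I" for i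
    using convergent_subseq_convergent[OF r(2)[rule_format, OF that] r2(1)] by (simp add: o_def)
  have "strict_mono (\<lambda>k. r (r2 k))"
    using strict_mono_o[OF r(1) r2(1)] by (simp add: o_def)
  then show ?case using new old by (intro exI[of _ "\<lambda>k. r (r2 k)"]) auto
qed

lemma coeff_seq_convergent_subseq:
  fixes A B :: "nat \<Rightarrow> nat \<Rightarrow> real"
  assumes "\<And>k i. i \<le> N \<Longrightarrow> \<bar>A k i\<bar> \<le> C" and "\<And>k i. i \<in> {1..N} \<Longrightarrow> \<bar>B k i\<bar> \<le> C"
  shows "\<exists>r a b. strict_mono r \<and> (\<lambda>k. coeff_dist N (A (r k)) (B (r k)) a b) \<longlonglongrightarrow> 0"
proof -
  obtain r1 where r1: "strict_mono r1" "\<forall>i\<in>{..N}. convergent (\<lambda>k. A (r1 k) i)"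
    using bounded_coords_convergent_subseq[of "{..N}" A C] assms(1) by auto
  obtain r2 where r2: "strict_mono r2" "\<forall>i\<in>{1..N}. convergent (\<lambda>k. B (r1 (r2 k)) i)"
    using bounded_coords_convergent_subseq[of "{1..N}" "\<lambda>k. B (r1 k)" C] assms(2) by auto
  define r where "r = r1 \<circ> r2"
  have r: "strict_mono r" unfolding r_def by (rule strict_mono_o[OF r1(1) r2(1)])
  have conv_A: "convergent (\<lambda>k. A (r k) i)" if "i \<le> N" for i
    using convergent_subseq_convergent[OF r1(2)[rule_format] r2(1)] that
    by (simp add: r_def o_def)
  have conv_B: "convergent (\<lambda>k. B (r k) i)" if "i \<in> {1..N}" for i
    using r2(2) that by (simp add: r_def)
  define a where "a i = lim (\<lambda>k. A (r k) i)" for i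
  define b where "b i = lim (\<lambda>k. B (r k) i)" for i
  have "(\<lambda>k. \<bar>A (r k) i - a i\<bar>) \<longlonglongrightarrow> 0" if "i \<le> N" for i
    using conv_A[OF that] unfolding a_def convergent_LIMSEQ_iff
    by (intro tendsto_rabs_zero) (simp add: LIM_zero)
  moreover have "(\<lambda>k. \<bar>B (r k) i - b i\<bar>) \<longlonglongrightarrow> 0" if "i \<in> {1..N}" for i
    using conv_B[OF that] unfolding b_def convergent_LIMSEQ_iff
    by (intro tendsto_rabs_zero) (simp add: LIM_zero)
  ultimately have "(\<lambda>k. coeff_dist N (A (r k)) (B (r k)) a b) \<longlonglongrightarrow> 0 + (\<Sum>i\<in>{1..N}. 0 + 0)"
    unfolding coeff_dist_def by (intro tendsto_add tendsto_sum) auto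
  then show ?thesis using r by auto
qed

lemma trig_poly_sublevel_lmeasurable:
  "{t\<in>{0..2*pi}. \<bar>trig_poly N a b t\<bar> \<le> c} \<in> lmeasurable"
  by (rule sublevel_lmeasurable[where P="\<lambda>x. \<bar>x\<bar> \<le> c", OF trig_poly_continuous]) (auto, measurable)

text \<open>The small sublevel sets of a nonzero trigonometric polynomial have small measure:
  they decrease to its finite zero set.\<close>
lemma sublevel_measure_small:
  assumes "coeff_norm N a b \<noteq> 0" and "\<delta> > 0"
  shows "\<exists>\<epsilon>>0. mes {t\<in>{0..2*pi}. \<bar>trig_poly N a b t\<bar> \<le> \<epsilon>} < \<delta>"
proof -
  define S where "S j = {t\<in>{0..2*pi}. \<bar>trig_poly N a b t\<bar> \<le> 1 / (real j + 1)}" for j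
  define Z where "Z = {t\<in>{0..2*pi}. trig_poly N a b t = 0}"
  have S_meas: "S j \<in> lmeasurable" for j
    unfolding S_def by (rule trig_poly_sublevel_lmeasurable)
  have "decseq S"
  proof (rule decseq_SucI)
    fix j
    have "1 / (real (Suc j) + 1) \<le> 1 / (real j + 1)" by (simp add: frac_le)
    then show "S (Suc j) \<subseteq> S j" unfolding S_def by auto
  qed
  have "\<bar>trig_poly N a b t\<bar> = 0" if "t \<in> (\<Inter>j. S j)" for t
  proof (rule antisym[OF field_le_epsilon abs_ge_zero])
    fix e :: real assume e: "e > 0"
    obtain j :: nat where j: "1 / e < real j" using reals_Archimedean2 by blast
    then have "1 / (real j + 1) < e" using e
      by (smt (verit, ccfv_SIG) divide_less_eq mult.commute zero_less_divide_1_iff)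
    moreover have "\<bar>trig_poly N a b t\<bar> \<le> 1 / (real j + 1)" using that unfolding S_def by auto
    ultimately show "\<bar>trig_poly N a b t\<bar> \<le> 0 + e" by simp
  qed
  then have "(\<Inter>j. S j) = Z" unfolding S_def Z_def by auto
  moreover have "Z \<subseteq> insert (2*pi) {t\<in>{0..<2*pi}. trig_poly N a b t = 0}"
    unfolding Z_def by auto
  then have "finite Z" using trig_poly_zeros_finite[OF assms(1)] finite_subset by blast
  then have "mes Z = 0" unfolding mes_def using negligible_finite negligible_imp_measure0 by blast
  moreover have "(\<lambda>j. measure lebesgue (S j)) \<longlonglongrightarrow> measure lebesgue (\<Inter>j. S j)"
  proof (rule Lim_measure_decseq)
    show "range S \<subseteq> sets lebesgue" using S_meas by auto
    show "emeasure lebesgue (S j) \<noteq> \<infinity>" for j using fmeasurableD2[OF S_meas[of j]] by simp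
  qed (rule \<open>decseq S\<close>)
  ultimately have "(\<lambda>j. mes (S j)) \<longlonglongrightarrow> 0" unfolding mes_def by simp
  then obtain j where "mes (S j) < \<delta>"
    using assms(2) by (metis eventually_at_top_linorder order_tendstoD(2) order_refl)
  then show ?thesis unfolding S_def by (intro exI[of _ "1 / (real j + 1)"]) auto
qed

lemma unit_norm_coeff_seq_limit:
  fixes A B :: "nat \<Rightarrow> nat \<Rightarrow> real"
  assumes unit_norm: "\<And>k. coeff_norm N (A k) (B k) = 1"
  obtains r a b where "strict_mono r" "(\<lambda>k. coeff_dist N (A (r k)) (B (r k)) a b) \<longlonglongrightarrow> 0"
    "coeff_norm N a b = 1"
proof -
  have "\<bar>A k i\<bar> \<le> 1" if "i \<le> N" for k i
    using coeff_norm_bounds_coeffs(1)[OF that, of "A k" "B k"] unit_norm[of k] by simp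
  moreover have "\<bar>B k i\<bar> \<le> 1" if "i \<in> {1..N}" for k i
    using coeff_norm_bounds_coeffs(2)[OF that, of "B k" "A k"] unit_norm[of k] by simp
  ultimately obtain r a b where r: "strict_mono r"
    and lim: "(\<lambda>k. coeff_dist N (A (r k)) (B (r k)) a b) \<longlonglongrightarrow> 0"
    using coeff_seq_convergent_subseq[of N A 1 B] by blast
  have "\<bar>1 - coeff_norm N a b\<bar> \<le> 0"
  proof (rule LIMSEQ_le_const[OF lim], intro exI allI impI)
    fix k :: nat
    show "\<bar>1 - coeff_norm N a b\<bar> \<le> coeff_dist N (A (r k)) (B (r k)) a b"
      using coeff_norm_dist_le[of N "A (r k)" "B (r k)" a b] unit_norm[of "r k"] by simp
  qed
  then have "coeff_norm N a b = 1" by simp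
  with r lim show ?thesis by (rule that)
qed

text \<open>Otherwise normalised counterexamples converge to a nonzero polynomial whose sublevel set
  {|p| \<le> \<epsilon>} would have measure at least \<delta> for every \<epsilon> > 0.\<close>
lemma remez_bound:
  assumes "\<delta> > 0"
  shows "\<exists>C. \<forall>a b. \<delta> \<le> mes {t\<in>{0..2*pi}. \<bar>trig_poly N a b t\<bar> \<le> 1} \<longrightarrow> coeff_norm N a b \<le> C"
proof (rule ccontr)
  assume "\<not> ?thesis"
  then have "\<forall>k::nat. \<exists>a b. \<delta> \<le> mes {t\<in>{0..2*pi}. \<bar>trig_poly N a b t\<bar> \<le> 1}
      \<and> real k + 1 < coeff_norm N a b"
    by (meson not_le)
  then obtain A0 B0 where big_sublevel: "\<And>k. \<delta> \<le> mes {t\<in>{0..2*pi}. \<bar>trig_poly N (A0 k) (B0 k) t\<bar> \<le> 1}"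
    and large_norm: "\<And>k. real k + 1 < coeff_norm N (A0 k) (B0 k)"
    by metis
  define S where "S k = coeff_norm N (A0 k) (B0 k)" for k
  have S_pos: "S k > 0" for k unfolding S_def using large_norm[of k] by linarith
  define A where "A k i = (1 / S k) * A0 k i" for k i
  define B where "B k i = (1 / S k) * B0 k i" for k i
  have scaled: "trig_poly N (A k) (B k) t = trig_poly N (A0 k) (B0 k) t / S k" for k t
    unfolding A_def[abs_def] B_def[abs_def] trig_poly_scale by simp
  have unit_norm: "coeff_norm N (A k) (B k) = 1" for k
    unfolding A_def[abs_def] B_def[abs_def] coeff_norm_scale using S_pos[of k] by (simp add: S_def)
  obtain r a b where r: "strict_mono r"
    and lim: "(\<lambda>k. coeff_dist N (A (r k)) (B (r k)) a b) \<longlonglongrightarrow> 0" and "coeff_norm N a b = 1"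
    by (rule unit_norm_coeff_seq_limit[OF unit_norm])
  then have "coeff_norm N a b \<noteq> 0" by simp
  then obtain \<epsilon> where \<epsilon>: "\<epsilon> > 0" and small: "mes {t\<in>{0..2*pi}. \<bar>trig_poly N a b t\<bar> \<le> \<epsilon>} < \<delta>"
    using sublevel_measure_small assms by blast
  obtain K :: nat where K: "2 / \<epsilon> \<le> real K" using real_arch_simple by blast
  have "\<forall>\<^sub>F k in sequentially. coeff_dist N (A (r k)) (B (r k)) a b < \<epsilon> / 2 \<and> K \<le> k"
    using lim \<epsilon> by (intro eventually_conj order_tendstoD(2) eventually_ge_at_top) auto
  then obtain k where k: "coeff_dist N (A (r k)) (B (r k)) a b < \<epsilon> / 2" "K \<le> k"
    unfolding eventually_sequentially by blast
  have "2 / \<epsilon> \<le> S (r k)"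
    using K k(2) seq_suble[OF r, of k] large_norm[of "r k"] unfolding S_def by linarith
  then have inv_S: "1 / S (r k) \<le> \<epsilon> / 2"
    using \<epsilon> S_pos by (simp add: field_simps)
  have "{t\<in>{0..2*pi}. \<bar>trig_poly N (A0 (r k)) (B0 (r k)) t\<bar> \<le> 1}
      \<subseteq> {t\<in>{0..2*pi}. \<bar>trig_poly N a b t\<bar> \<le> \<epsilon>}"
  proof safe
    fix t assume t: "\<bar>trig_poly N (A0 (r k)) (B0 (r k)) t\<bar> \<le> 1"
    have "\<bar>trig_poly N (A (r k)) (B (r k)) t\<bar> \<le> 1 / S (r k)"
      unfolding scaled using t S_pos[of "r k"] by (simp add: abs_div divide_right_mono)
    then show "\<bar>trig_poly N a b t\<bar> \<le> \<epsilon>"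
      using trig_poly_dist_le[of N "A (r k)" "B (r k)" t a b] k(1) inv_S by linarith
  qed
  then have "mes {t\<in>{0..2*pi}. \<bar>trig_poly N (A0 (r k)) (B0 (r k)) t\<bar> \<le> 1}
      \<le> mes {t\<in>{0..2*pi}. \<bar>trig_poly N a b t\<bar> \<le> \<epsilon>}"
    by (rule mes_mono[OF _ fmeasurableD[OF trig_poly_sublevel_lmeasurable] trig_poly_sublevel_lmeasurable])
  then show False using big_sublevel[of "r k"] small by linarith
qed

lemma mu_nonneg: "0 \<le> mu f"
  unfolding mu_def mes_def by (rule measure_nonneg)

lemma lead_poly_in_trig_polys_lead: "lead_poly n y a b \<in> trig_polys_lead n y"
  unfolding trig_polys_lead_iff by blast

lemma sigma_le_mu: "sigma_n n y \<le> mu (lead_poly n y a b)"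
proof -
  have "mu (lead_poly n y a b) \<in> mu ` trig_polys_lead n y"
    using lead_poly_in_trig_polys_lead by (rule imageI)
  moreover have "bdd_below (mu ` trig_polys_lead n y)"
    by (rule bdd_belowI[of _ 0]) (auto intro: mu_nonneg)
  ultimately show ?thesis unfolding sigma_n_def by (rule cInf_lower)
qed

lemma sigma_approx:
  assumes "sigma_n n y < z"
  shows "\<exists>a b. mu (lead_poly n y a b) < z"
proof -
  have "mu ` trig_polys_lead n y \<noteq> {}" using lead_poly_in_trig_polys_lead by blast
  from cInf_lessD[OF this assms[unfolded sigma_n_def]] obtain f
    where "f \<in> trig_polys_lead n y" "mu f < z" by blast
  then show ?thesis unfolding trig_polys_lead_iff by blast
qed

lemma mu_complement: "mu (lead_poly n y a b) + mes {t\<in>torus. \<bar>lead_poly n y a b t\<bar> < 1} = 2*pi"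
  unfolding mu_def by (rule torus_measure_split) (intro continuous_intros lead_poly_continuous)

lemma lead_poly_level_lmeasurable:
  "{x. P x} \<in> sets borel \<Longrightarrow> {t\<in>torus. P (lead_poly n y a b t)} \<in> lmeasurable"
  by (rule torus_sublevel_lmeasurable[OF lead_poly_continuous])

lemma grid_point_in_period:
  assumes "j < 2 * n"
  shows "real j * pi / real n \<in> {0..<2*pi}"
proof -
  have "real j * pi < 2 * real n * pi" using assms by simp
  then show ?thesis using assms by (simp add: divide_less_eq mult.commute mult.left_commute)
qed

lemma cis_grid_sum_zero:
  assumes "0 < m" "m < 2 * n"
  shows "(\<Sum>j<2*n. cis (real j * (real m * pi / real n))) = 0"
proof -
  define x where "x = cis (real m * pi / real n)"
  have "real m * pi / real n \<in> {0..<2*pi}" using assms(2) by (rule grid_point_in_period)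
  moreover have "0 < real m * pi / real n" using assms by simp
  ultimately have "x \<noteq> cis 0"
    using cis_inj_on_period unfolding x_def inj_on_def by fastforce
  then have x1: "x \<noteq> 1" by simp
  have "x ^ (2*n) = cis (real (2*n) * (real m * pi / real n))"
    unfolding x_def by (rule Complex.DeMoivre)
  also have "real (2*n) * (real m * pi / real n) = 2 * real m * pi" using assms by simp
  also have "cis (2 * real m * pi) = 1" by (simp add: cis.code complex_eq_iff)
  finally have "(\<Sum>j<2*n. x ^ j) = 0" using geometric_sum[OF x1] by simp
  moreover have "x ^ j = cis (real j * (real m * pi / real n))" for j
    unfolding x_def by (rule Complex.DeMoivre)
  ultimately show ?thesis by simp
qed

lemma alternating_grid_sums:
  assumes "k < n"
  shows "(\<Sum>j<2*n. (-1)^j * cos (real k * (real j * pi / real n))) = 0"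
    and "(\<Sum>j<2*n. (-1)^j * sin (real k * (real j * pi / real n))) = 0"
proof -
  have shift: "real j * (real (n + k) * pi / real n) = real j * pi + real k * (real j * pi / real n)" for j
    using assms by (simp add: field_simps)
  have cos_shift: "(-1)^j * cos (real k * (real j * pi / real n)) = cos (real j * (real (n + k) * pi / real n))"
    and sin_shift: "(-1)^j * sin (real k * (real j * pi / real n)) = sin (real j * (real (n + k) * pi / real n))"
    for j unfolding shift cos_add sin_add by simp_all
  have roots: "(\<Sum>j<2*n. cis (real j * (real (n + k) * pi / real n))) = 0"
    using assms by (intro cis_grid_sum_zero) auto
  show "(\<Sum>j<2*n. (-1)^j * cos (real k * (real j * pi / real n))) = 0"
    unfolding cos_shift using arg_cong[OF roots, of Re] by (simp add: Re_sum)
  show "(\<Sum>j<2*n. (-1)^j * sin (real k * (real j * pi / real n))) = 0"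
    unfolding sin_shift using arg_cong[OF roots, of Im] by (simp add: Im_sum)
qed

lemma alternating_sum_lower_order:
  assumes "n \<ge> 1"
  shows "(\<Sum>j<2*n. (-1)^j * trig_poly (n - 1) a b (real j * pi / real n)) = 0"
proof -
  define t where "t j = real j * pi / real n" for j
  have expand: "(-1)^j * trig_poly (n - 1) a b (t j) = a 0 * ((-1)^j * cos (real 0 * t j))
     + (\<Sum>k\<in>{1..n - 1}. a k * ((-1)^j * cos (real k * t j)) + b k * ((-1)^j * sin (real k * t j)))" for j
    unfolding trig_poly_def by (simp add: sum_distrib_left algebra_simps)
  have "(\<Sum>j<2*n. (-1)^j * trig_poly (n - 1) a b (t j)) = a 0 * (\<Sum>j<2*n. (-1)^j * cos (real 0 * t j))
     + (\<Sum>k\<in>{1..n - 1}. a k * (\<Sum>j<2*n. (-1)^j * cos (real k * t j))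
                       + b k * (\<Sum>j<2*n. (-1)^j * sin (real k * t j)))"
    unfolding expand sum.distrib sum_distrib_left by (simp add: sum.swap[of _ "{..<2*n}"])
  also have "\<dots> = 0"
  proof -
    have "(\<Sum>j<2*n. (-1)^j * cos (real 0 * t j)) = 0"
      using alternating_grid_sums(1)[of 0 n] assms unfolding t_def by simp
    moreover have "(\<Sum>k\<in>{1..n - 1}. a k * (\<Sum>j<2*n. (-1)^j * cos (real k * t j))
                       + b k * (\<Sum>j<2*n. (-1)^j * sin (real k * t j))) = 0"
      using alternating_grid_sums[of _ n] unfolding t_def by (intro sum.neutral) auto
    ultimately show ?thesis by (simp only: mult_zero_right add_0)
  qed
  finally show ?thesis unfolding t_def .
qed

text \<open>Every f \<in> F_n(y) reaches |f| \<ge> |y| on the period: its alternating sum over the 2n points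
  j\<pi>/n equals 2n y, since the lower-order part contributes nothing.\<close>
lemma lead_poly_reaches_lead:
  assumes "n \<ge> 1"
  shows "\<exists>t\<in>{0..<2*pi}. \<bar>y\<bar> \<le> \<bar>lead_poly n y a b t\<bar>"
proof (rule ccontr)
  assume "\<not> ?thesis"
  then have below: "\<And>t. t \<in> {0..<2*pi} \<Longrightarrow> \<bar>lead_poly n y a b t\<bar> < \<bar>y\<bar>" by (meson not_le)
  define t where "t j = real j * pi / real n" for j
  have peak: "(-1)^j * cos (real n * t j) = 1" for j
  proof -
    have "real n * t j = real j * pi" unfolding t_def using assms by simp
    then show ?thesis by (simp flip: power_mult_distrib)
  qed
  have "(\<Sum>j<2*n. (-1)^j * lead_poly n y a b (t j))
      = y * (\<Sum>j<2*n. (-1)^j * cos (real n * t j)) + (\<Sum>j<2*n. (-1)^j * trig_poly (n - 1) a b (t j))"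
    unfolding lead_poly_def distrib_left sum.distrib sum_distrib_left by (simp add: mult.left_commute)
  also have "\<dots> = 2 * real n * y"
    using peak alternating_sum_lower_order[OF assms, of a b] unfolding t_def by simp
  finally have alt_sum: "(\<Sum>j<2*n. (-1)^j * lead_poly n y a b (t j)) = 2 * real n * y" .
  have "2 * real n * \<bar>y\<bar> = \<bar>\<Sum>j<2*n. (-1)^j * lead_poly n y a b (t j)\<bar>"
    unfolding alt_sum by (simp add: abs_mult)
  also have "\<dots> \<le> (\<Sum>j<2*n. \<bar>lead_poly n y a b (t j)\<bar>)"
    using sum_abs[of "\<lambda>j. (-1)^j * lead_poly n y a b (t j)" "{..<2*n}"] by (simp add: abs_mult)
  also have "\<dots> < (\<Sum>j<2*n. \<bar>y\<bar>)"
    using below grid_point_in_period assms unfolding t_def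
    by (intro sum_strict_mono) (auto simp: lessThan_empty_iff)
  finally show False by simp
qed

text \<open>\<sigma>_n(y) < 2\<pi>: y cos nt vanishes at \<pi>/(2n), so it is below 1 on a set of positive measure.\<close>
lemma sigma_lt_2pi:
  assumes "n \<ge> 1"
  shows "sigma_n n y < 2*pi"
proof -
  define f where "f = lead_poly n y (\<lambda>_. 0) (\<lambda>_. 0)"
  define t0 where "t0 = pi / (2 * real n)"
  have "0 < mes {t\<in>torus. \<bar>f t\<bar> < 1}"
  proof (rule open_trace_measure_pos)
    show "t0 \<in> {0..2*pi}" unfolding t0_def using assms pi_gt_zero by (auto simp: field_simps)
    show "open {t. \<bar>f t\<bar> < 1}"
      unfolding f_def by (intro open_Collect_less continuous_intros lead_poly_continuous)
    show "t0 \<in> {t. \<bar>f t\<bar> < 1}"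
      unfolding f_def lead_poly_def t0_def trig_poly_zero using assms by simp
    show "{t\<in>torus. \<bar>f t\<bar> < 1} \<in> lmeasurable"
      unfolding f_def by (rule lead_poly_level_lmeasurable[where P="\<lambda>x. \<bar>x\<bar> < 1"]) measurable
  qed (auto simp: torus_def)
  then have "mu f < 2*pi" using mu_complement[of n y "\<lambda>_. 0" "\<lambda>_. 0"] unfolding f_def by linarith
  then show ?thesis using sigma_le_mu[of n y "\<lambda>_. 0" "\<lambda>_. 0"] unfolding f_def by linarith
qed

text \<open>Nearly minimal elements of F_n(y) have bounded lower-order coefficients: their
  sublevel set {|f| < 1} has measure more than (2\<pi> - \<sigma>_n(y))/2 > 0, so the Remez bound
  applies to f viewed as a trigonometric polynomial of order n.\<close>
lemma near_minimizer_coeffs_bounded: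
  assumes "n \<ge> 1"
  obtains C where
    "\<And>a b i. mu (lead_poly n y a b) < (sigma_n n y + 2*pi) / 2 \<Longrightarrow> i \<le> n - 1 \<Longrightarrow> \<bar>a i\<bar> \<le> C"
    "\<And>a b i. mu (lead_poly n y a b) < (sigma_n n y + 2*pi) / 2 \<Longrightarrow> i \<in> {1..n - 1} \<Longrightarrow> \<bar>b i\<bar> \<le> C"
proof -
  define \<delta> where "\<delta> = (2*pi - sigma_n n y) / 2"
  have "\<delta> > 0" using sigma_lt_2pi[OF assms] unfolding \<delta>_def by simp
  then obtain C where C: "\<And>a b. \<delta> \<le> mes {t\<in>{0..2*pi}. \<bar>trig_poly n a b t\<bar> \<le> 1} \<Longrightarrow> coeff_norm n a b \<le> C"
    using remez_bound by blast
  have norm_le: "coeff_norm n (a(n := y)) (b(n := 0)) \<le> C"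
    if small: "mu (lead_poly n y a b) < (sigma_n n y + 2*pi) / 2" for a b
  proof (rule C)
    have "\<delta> < mes {t\<in>torus. \<bar>lead_poly n y a b t\<bar> < 1}"
      using mu_complement[of n y a b] small unfolding \<delta>_def by argo
    also have "\<dots> \<le> mes {t\<in>{0..2*pi}. \<bar>trig_poly n (a(n := y)) (b(n := 0)) t\<bar> \<le> 1}"
    proof (rule mes_mono[OF _ fmeasurableD trig_poly_sublevel_lmeasurable])
      show "{t\<in>torus. \<bar>lead_poly n y a b t\<bar> < 1} \<in> lmeasurable"
        by (rule lead_poly_level_lmeasurable[where P="\<lambda>x. \<bar>x\<bar> < 1"]) measurable
    qed (auto simp: torus_def lead_poly_as_trig_poly[OF assms])
    finally show "\<delta> \<le> mes {t\<in>{0..2*pi}. \<bar>trig_poly n (a(n := y)) (b(n := 0)) t\<bar> \<le> 1}" by simp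
  qed
  show ?thesis
  proof (rule that)
    fix a b i
    assume small: "mu (lead_poly n y a b) < (sigma_n n y + 2*pi) / 2" and "i \<le> n - 1"
    then have "i \<noteq> n" "i \<le> n" using assms by auto
    then show "\<bar>a i\<bar> \<le> C"
      using coeff_norm_bounds_coeffs(1)[of i n "a(n := y)" "b(n := 0)"] norm_le[OF small] by simp
  next
    fix a b i
    assume small: "mu (lead_poly n y a b) < (sigma_n n y + 2*pi) / 2" and "i \<in> {1..n - 1}"
    then have "i \<noteq> n" "i \<in> {1..n}" using assms by auto
    then show "\<bar>b i\<bar> \<le> C"
      using coeff_norm_bounds_coeffs(2)[of i n "b(n := 0)" "a(n := y)"] norm_le[OF small] by simp
  qed
qed

lemma convergent_minimizing_sequence:
  assumes "n \<ge> 1"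
  obtains r A B a b where "strict_mono r"
    and "\<And>k. mu (lead_poly n y (A k) (B k)) < sigma_n n y + 1 / (real k + 1)"
    and "(\<lambda>k. coeff_dist (n - 1) (A (r k)) (B (r k)) a b) \<longlonglongrightarrow> 0"
proof -
  define s where "s = sigma_n n y"
  obtain C where bound_a: "\<And>a b i. mu (lead_poly n y a b) < (s + 2*pi) / 2 \<Longrightarrow> i \<le> n - 1 \<Longrightarrow> \<bar>a i\<bar> \<le> C"
    and bound_b: "\<And>a b i. mu (lead_poly n y a b) < (s + 2*pi) / 2 \<Longrightarrow> i \<in> {1..n - 1} \<Longrightarrow> \<bar>b i\<bar> \<le> C"
    using near_minimizer_coeffs_bounded[OF assms, where y = y] unfolding s_def by blast
  have "s < 2*pi" using sigma_lt_2pi[OF assms, of y] unfolding s_def .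
  then have "\<forall>k::nat. \<exists>a b. mu (lead_poly n y a b) < s + min ((2*pi - s) / 2) (1 / (real k + 1))"
    unfolding s_def by (intro allI sigma_approx) simp
  then obtain A B where AB: "\<And>k. mu (lead_poly n y (A k) (B k)) < s + min ((2*pi - s) / 2) (1 / (real k + 1))"
    by metis
  have near: "mu (lead_poly n y (A k) (B k)) < (s + 2*pi) / 2" for k
    using AB[of k] min.cobounded1[of "(2*pi - s) / 2" "1 / (real k + 1)"] by argo
  have "\<bar>A k i\<bar> \<le> C" if "i \<le> n - 1" for k i using bound_a[OF near that] .
  moreover have "\<bar>B k i\<bar> \<le> C" if "i \<in> {1..n - 1}" for k i using bound_b[OF near that] .
  ultimately obtain r a b where r: "strict_mono r"
    and lim: "(\<lambda>k. coeff_dist (n - 1) (A (r k)) (B (r k)) a b) \<longlonglongrightarrow> 0"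
    using coeff_seq_convergent_subseq[of "n - 1" A C B] by blast
  have "mu (lead_poly n y (A k) (B k)) < sigma_n n y + 1 / (real k + 1)" for k
    using AB[of k] min.cobounded2[of "(2*pi - s) / 2" "1 / (real k + 1)"] unfolding s_def by linarith
  from r this lim show ?thesis by (rule that)
qed

text \<open>Existence of an extremal element of F_n(y): the limit of a convergent subsequence of a
  minimising sequence exceeds 1 + \<eta> only on a set of measure at most \<sigma>_n(y).\<close>
lemma extremal_lead_poly_exists:
  assumes "n \<ge> 1"
  shows "\<exists>a b. \<forall>\<eta>>0. mes {t\<in>torus. 1 + \<eta> \<le> \<bar>lead_poly n y a b t\<bar>} \<le> sigma_n n y"
proof -
  obtain r A B a b where r: "strict_mono r"
    and AB: "\<And>k. mu (lead_poly n y (A k) (B k)) < sigma_n n y + 1 / (real k + 1)"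
    and lim: "(\<lambda>k. coeff_dist (n - 1) (A (r k)) (B (r k)) a b) \<longlonglongrightarrow> 0"
    using convergent_minimizing_sequence[OF assms, where y = y] by blast
  have "mes {t\<in>torus. 1 + \<eta> \<le> \<bar>lead_poly n y a b t\<bar>} \<le> sigma_n n y" if \<eta>: "\<eta> > 0" for \<eta>
  proof (rule field_le_epsilon)
    fix e :: real assume e: "e > 0"
    obtain K :: nat where K: "1 / e \<le> real K" using real_arch_simple by blast
    have "\<forall>\<^sub>F k in sequentially. coeff_dist (n - 1) (A (r k)) (B (r k)) a b < \<eta> \<and> K \<le> k"
      using lim \<eta> by (intro eventually_conj order_tendstoD(2) eventually_ge_at_top)
    then obtain k where k: "coeff_dist (n - 1) (A (r k)) (B (r k)) a b < \<eta>" "K \<le> k"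
      unfolding eventually_sequentially by blast
    have "1 / e \<le> real (r k)" using K k(2) seq_suble[OF r, of k] by linarith
    then have "1 \<le> e * real (r k)" using e by (simp add: field_simps)
    then have small_tail: "1 / (real (r k) + 1) < e" using e by (simp add: divide_less_eq algebra_simps)
    have sub: "{t\<in>torus. 1 + \<eta> \<le> \<bar>lead_poly n y a b t\<bar>}
        \<subseteq> {t\<in>torus. 1 \<le> \<bar>lead_poly n y (A (r k)) (B (r k)) t\<bar>}"
    proof safe
      fix t assume "1 + \<eta> \<le> \<bar>lead_poly n y a b t\<bar>"
      then show "1 \<le> \<bar>lead_poly n y (A (r k)) (B (r k)) t\<bar>"
        using lead_poly_dist_le[of n y "A (r k)" "B (r k)" t a b] k(1) by auto
    qed
    have "{t\<in>torus. 1 + \<eta> \<le> \<bar>lead_poly n y a b t\<bar>} \<in> lmeasurable"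
      by (rule lead_poly_level_lmeasurable[where P="\<lambda>x. 1 + \<eta> \<le> \<bar>x\<bar>"]) measurable
    moreover have "{t\<in>torus. 1 \<le> \<bar>lead_poly n y (A (r k)) (B (r k)) t\<bar>} \<in> lmeasurable"
      by (rule lead_poly_level_lmeasurable[where P="\<lambda>x. 1 \<le> \<bar>x\<bar>"]) measurable
    ultimately have "mes {t\<in>torus. 1 + \<eta> \<le> \<bar>lead_poly n y a b t\<bar>} \<le> mu (lead_poly n y (A (r k)) (B (r k)))"
      unfolding mu_def using sub by (intro mes_mono fmeasurableD)
    also have "\<dots> < sigma_n n y + e" using AB[of "r k"] small_tail by linarith
    finally show "mes {t\<in>torus. 1 + \<eta> \<le> \<bar>lead_poly n y a b t\<bar>} \<le> sigma_n n y + e" by simp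
  qed
  then show ?thesis by blast
qed

text \<open>\<sigma>_n(y) > 0 for y > 1: the extremal f reaches |y| > 1 + \<eta>, hence exceeds 1 + \<eta> on a
  set of positive measure.\<close>
lemma sigma_pos:
  assumes n: "n \<ge> 1" and y: "y > 1"
  shows "0 < sigma_n n y"
proof -
  obtain a b where extremal: "\<forall>\<eta>>0. mes {t\<in>torus. 1 + \<eta> \<le> \<bar>lead_poly n y a b t\<bar>} \<le> sigma_n n y"
    using extremal_lead_poly_exists[OF n] by blast
  obtain t1 where t1: "t1 \<in> {0..<2*pi}" "\<bar>y\<bar> \<le> \<bar>lead_poly n y a b t1\<bar>"
    using lead_poly_reaches_lead[OF n] by blast
  define \<eta> where "\<eta> = (y - 1) / 2"
  have "\<eta> > 0" "1 + \<eta> < y" unfolding \<eta>_def using y by argo+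
  have "0 < mes {t\<in>torus. 1 + \<eta> \<le> \<bar>lead_poly n y a b t\<bar>}"
  proof (rule open_trace_measure_pos)
    show "t1 \<in> {0..2*pi}" using t1 by auto
    show "open {t. 1 + \<eta> < \<bar>lead_poly n y a b t\<bar>}"
      by (intro open_Collect_less continuous_intros lead_poly_continuous)
    show "t1 \<in> {t. 1 + \<eta> < \<bar>lead_poly n y a b t\<bar>}" using t1(2) \<open>1 + \<eta> < y\<close> by simp
    show "{t\<in>torus. 1 + \<eta> \<le> \<bar>lead_poly n y a b t\<bar>} \<in> lmeasurable"
      by (rule lead_poly_level_lmeasurable[where P="\<lambda>x. 1 + \<eta> \<le> \<bar>x\<bar>"]) measurable
  qed (auto simp: torus_def)
  then show ?thesis using extremal \<open>\<eta> > 0\<close> by fastforce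
qed

definition sup_dev :: "nat \<Rightarrow> real set \<Rightarrow> (real \<Rightarrow> real) \<Rightarrow> real" where
  "sup_dev n Q g = Sup ((\<lambda>t. \<bar>cos (real n * t) - g t\<bar>) ` Q)"

lemma U_set_eq: "U_set n Q = Inf (sup_dev n Q ` trig_polys (n - 1))"
  unfolding U_set_def sup_dev_def ..

lemma sup_dev_ge:
  assumes "compact Q" "continuous_on UNIV g" "t \<in> Q"
  shows "\<bar>cos (real n * t) - g t\<bar> \<le> sup_dev n Q g"
proof -
  have "continuous_on Q (\<lambda>t. \<bar>cos (real n * t) - g t\<bar>)"
    using assms(2) by (intro continuous_intros) (auto intro: continuous_on_subset)
  then have "compact ((\<lambda>t. \<bar>cos (real n * t) - g t\<bar>) ` Q)"
    using assms(1) by (rule compact_continuous_image)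
  then have "bdd_above ((\<lambda>t. \<bar>cos (real n * t) - g t\<bar>) ` Q)"
    by (intro bounded_imp_bdd_above compact_imp_bounded)
  then show ?thesis unfolding sup_dev_def using assms(3) by (intro cSup_upper) auto
qed

lemma sup_dev_nonneg:
  assumes "compact Q" "Q \<noteq> {}" "continuous_on UNIV g"
  shows "0 \<le> sup_dev n Q g"
proof -
  obtain q where "q \<in> Q" using assms(2) by blast
  then show ?thesis using sup_dev_ge[OF assms(1,3), of q n] by linarith
qed

lemma U_set_le_sup_dev:
  assumes "compact Q" "Q \<noteq> {}" "g \<in> trig_polys (n - 1)"
  shows "U_set n Q \<le> sup_dev n Q g"
  unfolding U_set_eq
proof (rule cInf_lower)
  show "sup_dev n Q g \<in> sup_dev n Q ` trig_polys (n - 1)" using assms(3) by (rule imageI)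
  show "bdd_below (sup_dev n Q ` trig_polys (n - 1))"
    using sup_dev_nonneg[OF assms(1,2) trig_polys_continuous] by (intro bdd_belowI[of _ 0]) auto
qed

text \<open>Otherwise, with k = cos nt - g and |k| < c < 1/y on Q, the element y k of
  F_n(y) gives \<sigma>_n(y) \<le> mes {|k| \<ge> 1/y}; this set and the band c < |k| < 1/y lie in the
  complement of Q, which has measure \<sigma>_n(y), while the band has positive measure because
  |k| reaches 1 somewhere.\<close>
lemma sup_dev_lower:
  assumes n: "n \<ge> 1" and y: "y > 1"
    and Q: "compact Q" "Q \<subseteq> {0..2*pi}" "mes Q = 2*pi - sigma_n n y"
    and g: "g \<in> trig_polys (n - 1)"
  shows "1 / y \<le> sup_dev n Q g"
proof (rule ccontr)
  assume "\<not> 1 / y \<le> sup_dev n Q g"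
  define c where "c = (sup_dev n Q g + 1 / y) / 2"
  have c: "sup_dev n Q g < c" "c < 1 / y" using \<open>\<not> 1 / y \<le> sup_dev n Q g\<close> unfolding c_def by argo+
  obtain a b where g_eq: "g = trig_poly (n - 1) a b" using g unfolding trig_polys_iff by blast
  define k where "k t = cos (real n * t) - g t" for t
  have k_cont: "continuous_on UNIV (\<lambda>t. \<bar>k t\<bar>)"
    unfolding k_def using trig_polys_continuous[OF g] by (intro continuous_intros)
  have k_scaled: "lead_poly n z (\<lambda>i. - z * a i) (\<lambda>i. - z * b i) t = z * k t" for z t
    unfolding lead_poly_scaled k_def g_eq ..
  have k_small: "\<bar>k t\<bar> < c" if "t \<in> Q" for t
    using sup_dev_ge[OF Q(1) trig_polys_continuous[OF g] that, of n] c(1) unfolding k_def by linarith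
  have "sigma_n n y \<le> mu (lead_poly n y (\<lambda>i. - y * a i) (\<lambda>i. - y * b i))"
    by (rule sigma_le_mu)
  also have "\<dots> = mes {t\<in>torus. 1 / y \<le> \<bar>k t\<bar>}"
    unfolding mu_def k_scaled using y by (auto simp: abs_mult field_simps intro!: arg_cong[of _ _ mes])
  finally have "sigma_n n y \<le> mes {t\<in>torus. 1 / y \<le> \<bar>k t\<bar>}" .
  moreover have "mes {t\<in>torus. 1 / y \<le> \<bar>k t\<bar>} + mes {t\<in>torus. c < \<bar>k t\<bar> \<and> \<bar>k t\<bar> < 1 / y}
      + mes Q \<le> 2*pi"
    using k_small c(2) by (intro disjoint_levels_measure_bound[OF k_cont Q(1,2)])
  moreover have "0 < mes {t\<in>torus. c < \<bar>k t\<bar> \<and> \<bar>k t\<bar> < 1 / y}"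
  proof -
    have "Q \<noteq> {}" using Q(3) sigma_lt_2pi[OF n, of y] unfolding mes_def by auto
    then obtain q where q: "q \<in> Q" by blast
    obtain t1 where t1: "t1 \<in> {0..<2*pi}" "\<bar>1\<bar> \<le> \<bar>lead_poly n 1 (\<lambda>i. - 1 * a i) (\<lambda>i. - 1 * b i) t1\<bar>"
      using lead_poly_reaches_lead[OF n] by blast
    have "1 \<le> \<bar>k t1\<bar>" using t1(2) unfolding k_scaled by simp
    moreover have "1 / y < 1" using y by simp
    ultimately have "1 / y \<le> \<bar>k t1\<bar>" by linarith
    moreover have "q \<in> {0..2*pi}" "t1 \<in> {0..2*pi}" using q Q(2) t1(1) by auto
    ultimately show ?thesis using level_band_measure_pos[OF k_cont _ _ k_small[OF q] c(2)] by blast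
  qed
  ultimately show False using Q(3) by argo
qed

lemma U_set_lower:
  assumes "n \<ge> 1" "y > 1" "compact Q" "Q \<subseteq> {0..2*pi}" "mes Q = 2*pi - sigma_n n y"
  shows "1 / y \<le> U_set n Q"
  unfolding U_set_eq
proof (rule cInf_greatest)
  have "trig_poly (n - 1) (\<lambda>_. 0) (\<lambda>_. 0) \<in> trig_polys (n - 1)" unfolding trig_polys_iff by blast
  then show "sup_dev n Q ` trig_polys (n - 1) \<noteq> {}" by blast
qed (use sup_dev_lower[OF assms] in auto)

text \<open>Upper bound: for the extremal f \<in> F_n(y), the closed set {|f| \<le> 1 + \<eta>} meets the period
  in measure at least 2\<pi> - \<sigma>_n(y); on a compact part Q of exactly that measure,
  g = cos nt - f/y \<in> F_{n-1} deviates from cos nt by at most (1 + \<eta>)/y.\<close>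
lemma U_set_upper:
  assumes n: "n \<ge> 1" and y: "y > 1" and e: "e > 0"
  shows "\<exists>Q. compact Q \<and> Q \<subseteq> {0..2*pi} \<and> mes Q = 2*pi - sigma_n n y \<and> U_set n Q \<le> 1 / y + e"
proof -
  obtain a b where extremal: "\<forall>\<eta>>0. mes {t\<in>torus. 1 + \<eta> \<le> \<bar>lead_poly n y a b t\<bar>} \<le> sigma_n n y"
    using extremal_lead_poly_exists[OF n] by blast
  define \<eta> where "\<eta> = e * y"
  have "\<eta> > 0" unfolding \<eta>_def using e y by simp
  define f where "f = lead_poly n y a b"
  have f_cont: "continuous_on UNIV (\<lambda>t. \<bar>f t\<bar>)"
    unfolding f_def by (intro continuous_intros lead_poly_continuous)
  define F where "F = {t. \<bar>f t\<bar> \<le> 1 + \<eta>}"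
  have "closed F" unfolding F_def by (intro closed_Collect_le continuous_intros f_cont)
  have "mes {t\<in>torus. 1 + \<eta> \<le> \<bar>f t\<bar>} \<le> sigma_n n y"
    using extremal \<open>\<eta> > 0\<close> unfolding f_def by blast
  then have "2*pi - sigma_n n y \<le> mes (F \<inter> {0..2*pi})"
    using closed_sublevel_measure_ge[OF f_cont, of "1 + \<eta>"] unfolding F_def by linarith
  moreover have "0 \<le> 2*pi - sigma_n n y" using sigma_lt_2pi[OF n, of y] by simp
  ultimately obtain Q where Q: "compact Q" "Q \<subseteq> F \<inter> {0..2*pi}" "mes Q = 2*pi - sigma_n n y"
    using compact_subset_with_measure[OF \<open>closed F\<close>] by metis
  have "Q \<noteq> {}" using Q(3) sigma_lt_2pi[OF n, of y] unfolding mes_def by auto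
  define g where "g = trig_poly (n - 1) (\<lambda>i. - (1 / y) * a i) (\<lambda>i. - (1 / y) * b i)"
  have g: "g \<in> trig_polys (n - 1)" unfolding g_def trig_polys_iff by blast
  have deviation: "cos (real n * t) - g t = f t / y" for t
    using y unfolding g_def f_def lead_poly_def trig_poly_scale by (simp add: field_simps)
  have "sup_dev n Q g \<le> (1 + \<eta>) / y" unfolding sup_dev_def
  proof (rule cSup_least)
    show "(\<lambda>t. \<bar>cos (real n * t) - g t\<bar>) ` Q \<noteq> {}" using \<open>Q \<noteq> {}\<close> by simp
  next
    fix v assume "v \<in> (\<lambda>t. \<bar>cos (real n * t) - g t\<bar>) ` Q"
    then obtain t where "t \<in> Q" "v = \<bar>f t\<bar> / y" unfolding deviation using y by auto
    then show "v \<le> (1 + \<eta>) / y" using Q(2) y unfolding F_def by (auto intro: divide_right_mono)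
  qed
  moreover have "U_set n Q \<le> sup_dev n Q g"
    using Q(1) \<open>Q \<noteq> {}\<close> g by (rule U_set_le_sup_dev)
  moreover have "(1 + \<eta>) / y = 1 / y + e" unfolding \<eta>_def using y by (simp add: field_simps)
  ultimately show ?thesis using Q by auto
qed

lemma cInf_eq_by_approximation:
  fixes S :: "real set"
  assumes lower: "\<And>v. v \<in> S \<Longrightarrow> c \<le> v" and approx: "\<And>e. e > 0 \<Longrightarrow> \<exists>v\<in>S. v \<le> c + e"
  shows "Inf S = c"
proof (rule cInf_eq_non_empty)
  show "S \<noteq> {}" using approx[of 1] by auto
  show "\<And>v. v \<in> S \<Longrightarrow> c \<le> v" by (rule lower)
  fix d assume d: "\<And>v. v \<in> S \<Longrightarrow> d \<le> v"
  show "d \<le> c"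
  proof (rule field_le_epsilon)
    fix e :: real assume "e > 0"
    then obtain v where "v \<in> S" "v \<le> c + e" using approx by blast
    then show "d \<le> c + e" using d by fastforce
  qed
qed

theorem corollary3:
  fixes n :: nat and y :: real
  assumes "n \<ge> 1" and "y > 1"
  defines "\<alpha> \<equiv> (2*pi - sigma_n n y) / 2"
  shows "0 < \<alpha> \<and> \<alpha> < pi \<and> U_meas n (2*\<alpha>) = 1 / y"
proof -
  let ?admissible = "{Q. compact Q \<and> Q \<subseteq> {0..2*pi} \<and> mes Q = 2*pi - sigma_n n y}"
  have "2*\<alpha> = 2*pi - sigma_n n y" unfolding \<alpha>_def by simp
  then have "U_meas n (2*\<alpha>) = Inf (U_set n ` ?admissible)"
    unfolding U_meas_def by simp
  also have "\<dots> = 1 / y"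
  proof (rule cInf_eq_by_approximation)
    show "\<And>v. v \<in> U_set n ` ?admissible \<Longrightarrow> 1 / y \<le> v"
      using U_set_lower[OF assms(1,2)] by blast
    show "\<And>e. e > 0 \<Longrightarrow> \<exists>v\<in>U_set n ` ?admissible. v \<le> 1 / y + e"
      using U_set_upper[OF assms(1,2)] by blast
  qed
  finally show ?thesis
    using sigma_lt_2pi[OF assms(1)] sigma_pos[OF assms(1,2)] unfolding \<alpha>_def by simp
qed

end
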